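(* Let $a,b,c,d$ be fixed indeterminates and, for $j=1,2$, let $u_j,x_j,y_j$ be indeterminates. For indeterminates (or polynomials) $u,x,y$ put \[ N(u,x,y)=\begin{pmatrix} u & -ad\,y & -ad\,x-bd\,y\\ x & u-bx-cy & -cx-dy\\ y & ax & u-cy\end{pmatrix}, \] and $N_j=N(u_j,x_j,y_j)$ for $j=1,2$. Then $N_1N_2=N_2N_1=N(u_3,x_3,y_3)$, where \begin{align*} u_3&=u_1u_2-ad\,x_2y_1-ad\,x_1y_2-bd\,y_1y_2,\\ x_3&=u_1x_2+u_2x_1-b\,x_1x_2-c\,x_1y_2-c\,x_2y_1-d\,y_1y_2,\\ y_3&=u_1y_2+u_2y_1+a\,x_1x_2-c\,y_1y_2; \end{align*} that is, the product is commutative and is again a matrix of the same form. Moreover: (i) Specializing $a=0$, $b=1$, $c=0$, $d=-D$, one has $\det N(u,x,y)=(u-x)(u^2-Dy^2)$, and taking determinants in $N_1N_2=N(u_3,x_3,y_3)$ yields Brahmagupta's identity \[ (u_1u_2+Dy_1y_2)^2-D(u_1y_2+u_2y_1)^2=(u_1^2-Dy_1^2)(u_2^2-Dy_2^2). \] (ii) Specializing $a=0$, $b=C$, $c=-B$, $d=1$, one has $\det N(u,x,y)=(u-Cx+By)(u^2+Buy+Cy^2)$, and taking determinants in $N_1N_2=N(u_3,x_3,y_3)$ yields, for the principal binary quadratic form $Q(u,y)=u^2+Buy+Cy^2$, \[ Q(u_1u_2-Cy_1y_2,\;u_1y_2+u_2y_1+By_1y_2)=Q(u_1,y_1)\,Q(u_2,y_2),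 \] which is the special case of Gauss' bilinear composition for $Q_1=Q_2=(1,B,C)$.
   Context: $D$, $B$, $C$ denote further indeterminates (or integers). The binary quadratic form $u^2+Buy+Cy^2$ is abbreviated $(1,B,C)$. *)

theory Defs
  imports "HOL-Analysis.Analysis"
begin

text \<open>The 3x3 matrix N(u,x,y) with parameters a,b,c,d, entries in an arbitrary
commutative ring (identities in indeterminates = identities in every commutative ring).\<close>
definition Nmat :: "'a::comm_ring_1 \<Rightarrow> 'a \<Rightarrow> 'a \<Rightarrow> 'a \<Rightarrow> 'a \<Rightarrow> 'a \<Rightarrow> 'a \<Rightarrow> 'a^3^3" where
  "Nmat a b c d u x y = vector [
     vector [u, - (a*d*y), - (a*d*x) - b*d*y],
     vector [x, u - b*x - c*y, - (c*x) - d*y],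
     vector [y, a*x, u - c*y]]"

definition Qform :: "'a::comm_ring_1 \<Rightarrow> 'a \<Rightarrow> 'a \<Rightarrow> 'a \<Rightarrow> 'a" where
  "Qform B C u y = u^2 + B*u*y + C*y^2"

end

theory Submission
  imports Defs
begin

text \<open>\<open>N(u,x,y)\<close> is closed under products and commutative because it is the matrix of
multiplication by \<open>u + x\<theta> + y\<phi>\<close> in a commutative algebra of rank 3.
When \<open>a = 0\<close>, the second basis vector is an eigenvector of every \<open>N(u,x,y)\<close>,
with eigenvalue \<open>u - bx - cy\<close>, and the complementary 2x2 block (rows and columns 1, 3)
is the matrix of multiplication by \<open>u + y\<omega>\<close> in the quadratic algebra with \<open>\<omega>\<^sup>2 = -c\<omega> - bd\<close>.
So \<open>det N\<close> factors as that eigenvalue times the norm form \<open>u\<^sup>2 - cuy + bdy\<^sup>2\<close>,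
and multiplicativity of the 2x2 determinant gives the composition law of this form;
Brahmagupta's identity is the case \<open>(1, 0, -D)\<close>.\<close>

lemma Nmat_mult:
  fixes a b c d u1 x1 y1 u2 x2 y2 :: "'a::comm_ring_1"
  shows "Nmat a b c d u1 x1 y1 ** Nmat a b c d u2 x2 y2 =
      Nmat a b c d
        (u1*u2 - a*d*x2*y1 - a*d*x1*y2 - b*d*y1*y2)
        (u1*x2 + u2*x1 - b*x1*x2 - c*x1*y2 - c*x2*y1 - d*y1*y2)
        (u1*y2 + u2*y1 + a*x1*x2 - c*y1*y2)"
  unfolding Nmat_def
  by (simp add: vec_eq_iff forall_3 matrix_matrix_mult_def sum_3 vector_3)
     (simp add: algebra_simps)

lemma Nmat_mult_commute:
  fixes a b c d u1 x1 y1 u2 x2 y2 :: "'a::comm_ring_1"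
  shows "Nmat a b c d u1 x1 y1 ** Nmat a b c d u2 x2 y2 =
         Nmat a b c d u2 x2 y2 ** Nmat a b c d u1 x1 y1"
  unfolding Nmat_mult by (simp add: algebra_simps)

lemma det_Nmat_a0:
  fixes b c d u x y :: "'a::comm_ring_1"
  shows "det (Nmat 0 b c d u x y) = (u - b*x - c*y) * Qform (- c) (b*d) u y"
  unfolding Nmat_def Qform_def
  by (simp add: det_3 vector_3) (simp add: algebra_simps power2_eq_square)

text \<open>The matrix of multiplication by \<open>u + y\<omega>\<close> on the basis \<open>1, \<omega>\<close>, where \<open>\<omega>\<^sup>2 = B\<omega> - C\<close>.\<close>

definition qmult_mat :: "'a::comm_ring_1 \<Rightarrow> 'a \<Rightarrow> 'a \<Rightarrow> 'a \<Rightarrow> 'a^2^2" where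
  "qmult_mat B C u y = vector [vector [u, - (C*y)], vector [y, u + B*y]]"

lemma det_qmult_mat: "det (qmult_mat B C u y) = Qform B C u y"
  unfolding qmult_mat_def Qform_def
  by (simp add: det_2 vector_2) (simp add: algebra_simps power2_eq_square)

lemma qmult_mat_mult:
  "qmult_mat B C u1 y1 ** qmult_mat B C u2 y2 =
   qmult_mat B C (u1*u2 - C*y1*y2) (u1*y2 + u2*y1 + B*y1*y2)"
  unfolding qmult_mat_def
  by (simp add: vec_eq_iff forall_2 matrix_matrix_mult_def sum_2 vector_2)
     (simp add: algebra_simps)

lemma Qform_mult:
  "Qform B C (u1*u2 - C*y1*y2) (u1*y2 + u2*y1 + B*y1*y2) = Qform B C u1 y1 * Qform B C u2 y2"
  by (metis det_qmult_mat qmult_mat_mult det_mul)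

theorem proposition2p1:
  fixes a b c d u1 x1 y1 u2 x2 y2 D B C :: "'a::comm_ring_1"
  shows
   "Nmat a b c d u1 x1 y1 ** Nmat a b c d u2 x2 y2 = Nmat a b c d u2 x2 y2 ** Nmat a b c d u1 x1 y1 \<and>
    Nmat a b c d u1 x1 y1 ** Nmat a b c d u2 x2 y2 =
      Nmat a b c d
        (u1*u2 - a*d*x2*y1 - a*d*x1*y2 - b*d*y1*y2)
        (u1*x2 + u2*x1 - b*x1*x2 - c*x1*y2 - c*x2*y1 - d*y1*y2)
        (u1*y2 + u2*y1 + a*x1*x2 - c*y1*y2) \<and>
    (\<forall>u x y. det (Nmat 0 1 0 (- D) u x y) = (u - x) * (u^2 - D*y^2)) \<and>
    (u1*u2 + D*y1*y2)^2 - D*(u1*y2 + u2*y1)^2 = (u1^2 - D*y1^2) * (u2^2 - D*y2^2) \<and>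
    (\<forall>u x y. det (Nmat 0 C (- B) 1 u x y) = (u - C*x + B*y) * (u^2 + B*u*y + C*y^2)) \<and>
    Qform B C (u1*u2 - C*y1*y2) (u1*y2 + u2*y1 + B*y1*y2) = Qform B C u1 y1 * Qform B C u2 y2"
proof (intro conjI allI)
  show "det (Nmat 0 1 0 (- D) u x y) = (u - x) * (u^2 - D*y^2)" for u x y
    by (simp add: det_Nmat_a0 Qform_def)
  show "(u1*u2 + D*y1*y2)^2 - D*(u1*y2 + u2*y1)^2 = (u1^2 - D*y1^2) * (u2^2 - D*y2^2)"
    using Qform_mult [of 0 "- D" u1 u2 y1 y2] by (simp add: Qform_def)
  show "det (Nmat 0 C (- B) 1 u x y) = (u - C*x + B*y) * (u^2 + B*u*y + C*y^2)" for u x y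
    by (simp add: det_Nmat_a0 Qform_def)
qed (simp_all only: Nmat_mult_commute Nmat_mult Qform_mult)

end
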